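(* Every consistent theory $T$ of $L([1],[\omega],\mathtt u,\mathtt U)$ can be extended to a complete theory, i.e. there is a theory $T^*\supseteq T$ that is consistent and such that for every formula $\phi$, $T^*\vdash\phi$ or $T^*\vdash\neg\phi$.
   Context: Fix $Var=\{p_n : n\in\omega\}$. The formulas of $L([1],[\omega],\mathtt u,\mathtt U)$ form the smallest set containing $Var$ and closed under $\neg\phi$, $[1]\phi$, $[\omega]\phi$, $(\phi\wedge\psi)$, $(\phi\,\mathtt u\,\psi)$, $(\phi\,\mathtt U\,\psi)$. Abbreviations: $\vee,\to,\leftrightarrow$ as usual; $\mathtt f\phi:=(\phi\to\phi)\,\mathtt u\,\phi$, $\mathtt g\phi:=\neg\mathtt f\neg\phi$; $[a]^0\phi:=\phi$, $[a]^{n+1}\phi:=[a][a]^n\phi$ for $a\in\{1,\omega\}$. A theory is a nonempty set of formulas. Proof system. Axioms: all instances of A1 substitution instances of classical tautologies; A2 $[1][\omega]\phi\leftrightarrow[\omega]\phi$; A3 $\neg[a]\phi\leftrightarrow[a]\neg\phi$ ($a\in\{1,\omega\}$); A4 $[a](\phi*\psi)\leftrightarrow([a]\phi*[a]\psi)$ ($a\in\{1,\omega\}$, $*\in\{\wedge,\vee,\to,\leftrightarrow\}$); A5 $\psi\to\phi\,\mathtt u\,\psi$; A6 $\phi\,\mathtt u\,\psi\to\phi\,\mathtt U\,\psi$; A7 $\big(\bigwedge_{k=0}^n[1]^k(\phi\wedge\neg\psi)\wedge[1]^{n+1}\psi\big)\to\phi\,\mathtt u\,\psi$ ($n\in\omega$);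 A8 $\big(\bigwedge_{k=0}^n[\omega]^k\mathtt g(\phi\wedge\neg\psi)\wedge[\omega]^{n+1}(\phi\,\mathtt u\,\psi)\big)\to\phi\,\mathtt U\,\psi$ ($n\in\omega$). Rules: R1 from $\phi$ and $\phi\to\psi$ infer $\psi$; R2 from $\phi$ infer $[a]\phi$, $a\in\{1,\omega\}$; R3 from $\theta\to\neg\psi$ and all $\theta\to\big(\bigvee_{k=0}^n[1]^k(\neg\phi\vee\psi)\vee[1]^{n+1}\neg\psi\big)$, $n\in\omega$, infer $\theta\to\neg(\phi\,\mathtt u\,\psi)$; R4 from $\theta\to\neg(\phi\,\mathtt u\,\psi)$ and all $\theta\to\big(\bigvee_{k=0}^n[\omega]^k\neg\mathtt g(\phi\wedge\neg\psi)\vee[\omega]^{n+1}\neg(\phi\,\mathtt u\,\psi)\big)$, $n\in\omega$, infer $\theta\to\neg(\phi\,\mathtt U\,\psi)$. $\vdash\phi$ ($\phi$ is a theorem) iff there is a sequence $(\phi_\beta)_{\beta\le\alpha}$, $\alpha$ a countable ordinal, with $\phi_\alpha=\phi$ and each $\phi_\beta$ an axiom or obtained from earlier members by a rule. $T\vdash\phi$ iff there is such a sequence in which each member is an axiom, a member of $T$, or obtained from earlier members by a rule, where R2 may only be applied to theorems. A theory $T$ is consistent iff there is no formula $\chi$ with $T\vdash\chi$ and $T\vdash\neg\chi$. *)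

theory Defs
  imports Main
begin

datatype fm =
    Var nat
  | Neg fm
  | Box1 fm
  | BoxW fm
  | And fm fm
  | Uu fm fm
  | UU fm fm

definition Or :: "fm \<Rightarrow> fm \<Rightarrow> fm" where "Or a b = Neg (And (Neg a) (Neg b))"
definition Imp :: "fm \<Rightarrow> fm \<Rightarrow> fm" where "Imp a b = Neg (And a (Neg b))"
definition Iff :: "fm \<Rightarrow> fm \<Rightarrow> fm" where "Iff a b = And (Imp a b) (Imp b a)"

definition Ff :: "fm \<Rightarrow> fm" where "Ff a = Uu (Imp a a) a"
definition Gg :: "fm \<Rightarrow> fm" where "Gg a = Neg (Ff (Neg a))"

datatype modality = M1 | MW

fun box :: "modality \<Rightarrow> fm \<Rightarrow> fm" where
  "box M1 a = Box1 a"
| "box MW a = BoxW a"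

definition boxn :: "modality \<Rightarrow> nat \<Rightarrow> fm \<Rightarrow> fm" where
  "boxn m n a = (box m ^^ n) a"

fun bigAnd :: "(nat \<Rightarrow> fm) \<Rightarrow> nat \<Rightarrow> fm" where
  "bigAnd f 0 = f 0"
| "bigAnd f (Suc n) = And (bigAnd f n) (f (Suc n))"

fun bigOr :: "(nat \<Rightarrow> fm) \<Rightarrow> nat \<Rightarrow> fm" where
  "bigOr f 0 = f 0"
| "bigOr f (Suc n) = Or (bigOr f n) (f (Suc n))"

text \<open>Truth-functional evaluation: formulas not headed by negation or conjunction
  are treated as propositional atoms. A formula is a substitution instance of a
  classical tautology iff it is true under every such evaluation.\<close>
fun peval :: "(fm \<Rightarrow> bool) \<Rightarrow> fm \<Rightarrow> bool" where
  "peval v (Neg a) = (\<not> peval v a)"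
| "peval v (And a b) = (peval v a \<and> peval v b)"
| "peval v a = v a"

definition taut_inst :: "fm \<Rightarrow> bool" where
  "taut_inst a \<longleftrightarrow> (\<forall>v. peval v a)"

inductive axiom :: "fm \<Rightarrow> bool" where
  A1: "taut_inst a \<Longrightarrow> axiom a"
| A2: "axiom (Iff (Box1 (BoxW a)) (BoxW a))"
| A3: "axiom (Iff (Neg (box m a)) (box m (Neg a)))"
| A4_and: "axiom (Iff (box m (And a b)) (And (box m a) (box m b)))"
| A4_or: "axiom (Iff (box m (Or a b)) (Or (box m a) (box m b)))"
| A4_imp: "axiom (Iff (box m (Imp a b)) (Imp (box m a) (box m b)))"
| A4_iff: "axiom (Iff (box m (Iff a b)) (Iff (box m a) (box m b)))"
| A5: "axiom (Imp b (Uu a b))"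
| A6: "axiom (Imp (Uu a b) (UU a b))"
| A7: "axiom (Imp (And (bigAnd (\<lambda>k. boxn M1 k (And a (Neg b))) n) (boxn M1 (Suc n) b))
                   (Uu a b))"
| A8: "axiom (Imp (And (bigAnd (\<lambda>k. boxn MW k (Gg (And a (Neg b)))) n)
                        (boxn MW (Suc n) (Uu a b)))
                   (UU a b))"

text \<open>The paper defines derivations as sequences of countable ordinal length. Since
  every rule has at most countably many premises, the set of formulas derivable in
  this sense is exactly the least set closed under the axioms and rules, which we
  define inductively.\<close>

inductive provable :: "fm \<Rightarrow> bool" where
  ax: "axiom a \<Longrightarrow> provable a"
| R1: "provable a \<Longrightarrow> provable (Imp a b) \<Longrightarrow> provable b"
| R2: "provable a \<Longrightarrow> provable (box m a)"
| R3: "provable (Imp th (Neg b)) \<Longrightarrow>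
       (\<forall>n. provable (Imp th (Or (bigOr (\<lambda>k. boxn M1 k (Or (Neg a) b)) n)
                             (boxn M1 (Suc n) (Neg b))))) \<Longrightarrow>
       provable (Imp th (Neg (Uu a b)))"
| R4: "provable (Imp th (Neg (Uu a b))) \<Longrightarrow>
       (\<forall>n. provable (Imp th (Or (bigOr (\<lambda>k. boxn MW k (Neg (Gg (And a (Neg b))))) n)
                             (boxn MW (Suc n) (Neg (Uu a b)))))) \<Longrightarrow>
       provable (Imp th (Neg (UU a b)))"

text \<open>Derivability from a theory T: R2 may only be applied to theorems.\<close>
inductive derives :: "fm set \<Rightarrow> fm \<Rightarrow> bool" where
  d_ax: "axiom a \<Longrightarrow> derives T a"
| d_hyp: "a \<in> T \<Longrightarrow> derives T a"
| d_R1: "derives T a \<Longrightarrow> derives T (Imp a b) \<Longrightarrow> derives T b"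
| d_R2: "provable a \<Longrightarrow> derives T (box m a)"
| d_R3: "derives T (Imp th (Neg b)) \<Longrightarrow>
       (\<forall>n. derives T (Imp th (Or (bigOr (\<lambda>k. boxn M1 k (Or (Neg a) b)) n)
                             (boxn M1 (Suc n) (Neg b))))) \<Longrightarrow>
       derives T (Imp th (Neg (Uu a b)))"
| d_R4: "derives T (Imp th (Neg (Uu a b))) \<Longrightarrow>
       (\<forall>n. derives T (Imp th (Or (bigOr (\<lambda>k. boxn MW k (Neg (Gg (And a (Neg b))))) n)
                             (boxn MW (Suc n) (Neg (Uu a b)))))) \<Longrightarrow>
       derives T (Imp th (Neg (UU a b)))"

definition is_theory :: "fm set \<Rightarrow> bool" where
  "is_theory T \<longleftrightarrow> T \<noteq> {}"

definition consistent :: "fm set \<Rightarrow> bool" where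
  "consistent T \<longleftrightarrow> \<not> (\<exists>c. derives T c \<and> derives T (Neg c))"

definition complete :: "fm set \<Rightarrow> bool" where
  "complete T \<longleftrightarrow> (\<forall>a. derives T a \<or> derives T (Neg a))"

end

theory Submission
  imports Defs "HOL-Library.Countable"
begin

text \<open>A Lindenbaum construction along an enumeration of all formulas. Two points make it work
  despite the infinitary rules R3 and R4. First, both rules carry an arbitrary antecedent
  \<open>\<theta>\<close>, so the deduction theorem still holds. Second, whenever a formula \<open>\<theta> \<rightarrow> \<not>(\<phi> u \<psi>)\<close>
  (or \<open>\<theta> \<rightarrow> \<not>(\<phi> U \<psi>)\<close>) is rejected, its negation is added together with the negation of
  one premise instance \<open>\<theta> \<rightarrow> q\<close> of the corresponding rule, which can be done consistently
  because otherwise all premise instances would be derivable and the rule would yield the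
  rejected formula. The union of the chain is then closed under derivability, and it
  decides every formula.\<close>

instance fm :: countable by countable_datatype

abbreviation R3_disj :: "fm \<Rightarrow> fm \<Rightarrow> nat \<Rightarrow> fm" where
  "R3_disj a b n \<equiv> Or (bigOr (\<lambda>k. boxn M1 k (Or (Neg a) b)) n) (boxn M1 (Suc n) (Neg b))"

abbreviation R4_disj :: "fm \<Rightarrow> fm \<Rightarrow> nat \<Rightarrow> fm" where
  "R4_disj a b n \<equiv>
     Or (bigOr (\<lambda>k. boxn MW k (Neg (Gg (And a (Neg b))))) n) (boxn MW (Suc n) (Neg (Uu a b)))"

fun omega_premises :: "fm \<Rightarrow> fm set" where
  "omega_premises (Neg (Uu a b)) = insert (Neg b) (range (R3_disj a b))"
| "omega_premises (Neg (UU a b)) = insert (Neg (Uu a b)) (range (R4_disj a b))"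
| "omega_premises _ = {}"

lemma derives_omega_rule:
  assumes "omega_premises c \<noteq> {}" and "\<forall>q\<in>omega_premises c. derives T (Imp th q)"
  shows "derives T (Imp th c)"
  using assms by (cases c rule: omega_premises.cases) (auto intro!: derives.d_R3 derives.d_R4)

lemma derives_mono: "derives S a \<Longrightarrow> S \<subseteq> S' \<Longrightarrow> derives S' a"
  by (induction rule: derives.induct) (auto intro: derives.intros)

lemma derives_taut: "taut_inst a \<Longrightarrow> derives T a"
  by (simp add: axiom.A1 derives.d_ax)

lemma derives_taut_mp: "taut_inst (Imp a b) \<Longrightarrow> derives T a \<Longrightarrow> derives T b"
  using derives.d_R1 derives_taut by blast

lemma derives_taut_mp2:
  "taut_inst (Imp a (Imp b c)) \<Longrightarrow> derives T a \<Longrightarrow> derives T b \<Longrightarrow> derives T c"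
  using derives.d_R1 derives_taut_mp by blast

lemma taut_K: "taut_inst (Imp a (Imp b a))"
  and taut_refl: "taut_inst (Imp a a)"
  and taut_S: "taut_inst (Imp (Imp p a) (Imp (Imp p (Imp a b)) (Imp p b)))"
  and taut_curry: "taut_inst (Imp (Imp (And p a) b) (Imp p (Imp a b)))"
  and taut_uncurry: "taut_inst (Imp (Imp p (Imp a b)) (Imp (And p a) b))"
  and taut_neg_intro: "taut_inst (Imp (Imp p c) (Imp (Imp p (Neg c)) (Neg p)))"
  and taut_uncurry_double_neg: "taut_inst (Imp (Imp p (Neg (Neg (Imp a b)))) (Imp (And a p) b))"
  and taut_imp_of_neg: "taut_inst (Imp (Imp (And a (Neg (Imp a b))) b) (Imp a b))"
  by (auto simp: taut_inst_def Imp_def)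

lemma derives_omega_rule_under_hyp:
  assumes "omega_premises c \<noteq> {}" and "\<forall>q\<in>omega_premises c. derives T (Imp p (Imp th q))"
  shows "derives T (Imp p (Imp th c))"
proof -
  have "derives T (Imp (And p th) c)"
    using assms by (intro derives_omega_rule) (auto intro: derives_taut_mp[OF taut_uncurry])
  then show ?thesis by (rule derives_taut_mp[OF taut_curry])
qed

theorem deduction_theorem: "derives (insert p T) q \<Longrightarrow> derives T (Imp p q)"
proof (induction "insert p T" q rule: derives.induct)
  case (d_ax a)
  then show ?case using derives_taut_mp[OF taut_K] derives.d_ax by blast
next
  case (d_hyp a)
  then show ?case using derives_taut[OF taut_refl] derives_taut_mp[OF taut_K] derives.d_hyp
    by (cases "a = p") auto
next
  case (d_R1 a b)
  then show ?case using derives_taut_mp2[OF taut_S] by blast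
next
  case (d_R2 a m)
  then show ?case using derives_taut_mp[OF taut_K] derives.d_R2 by blast
next
  case (d_R3 th b a)
  then show ?case using derives_omega_rule_under_hyp[of "Neg (Uu a b)"] by auto
next
  case (d_R4 th a b)
  then show ?case using derives_omega_rule_under_hyp[of "Neg (UU a b)"] by auto
qed

lemma inconsistent_insert_derives_Neg: "\<not> consistent (insert p T) \<Longrightarrow> derives T (Neg p)"
  unfolding consistent_def using deduction_theorem derives_taut_mp2[OF taut_neg_intro] by blast

lemma inconsistentI: "derives T a \<Longrightarrow> derives T (Neg a) \<Longrightarrow> \<not> consistent T"
  unfolding consistent_def by blast

lemma consistent_insert_Neg:
  assumes "consistent S" and "\<not> consistent (insert p S)"
  shows "consistent (insert (Neg p) S)"
  using assms inconsistentI inconsistent_insert_derives_Neg by blast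

definition witnesses :: "fm \<Rightarrow> fm set" where
  "witnesses \<phi> = {Neg (Imp th q) | th c q. \<phi> = Imp th c \<and> q \<in> omega_premises c}"

lemma witnesses_Imp: "witnesses (Imp th c) = (\<lambda>q. Neg (Imp th q)) ` omega_premises c"
  by (auto simp: witnesses_def Imp_def)

lemma consistent_witness:
  assumes S: "consistent S" and rejected: "\<not> consistent (insert \<phi> S)"
    and "witnesses \<phi> \<noteq> {}"
  shows "\<exists>w\<in>witnesses \<phi>. consistent (insert w (insert (Neg \<phi>) S))"
proof (rule ccontr)
  assume no_witness: "\<not> ?thesis"
  obtain th c where \<phi>: "\<phi> = Imp th c" and nonempty: "omega_premises c \<noteq> {}"
    using \<open>witnesses \<phi> \<noteq> {}\<close> by (auto simp: witnesses_def)
  have "derives S (Imp (And th (Neg \<phi>)) q)" if "q \<in> omega_premises c" for q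
  proof -
    have "derives S (Imp (Neg \<phi>) (Neg (Neg (Imp th q))))"
      using no_witness that by (auto simp: \<phi> witnesses_Imp
          intro!: deduction_theorem inconsistent_insert_derives_Neg)
    then show ?thesis by (rule derives_taut_mp[OF taut_uncurry_double_neg])
  qed
  then have "derives S (Imp (And th (Neg \<phi>)) c)"
    using nonempty by (blast intro: derives_omega_rule)
  then have "derives S \<phi>"
    unfolding \<phi> by (rule derives_taut_mp[OF taut_imp_of_neg])
  with S rejected show False using inconsistentI inconsistent_insert_derives_Neg by blast
qed

definition lindenbaum_step :: "fm set \<Rightarrow> fm \<Rightarrow> fm set" where
  "lindenbaum_step S \<phi> =
     (if consistent (insert \<phi> S) then insert \<phi> S
      else if \<exists>w\<in>witnesses \<phi>. consistent (insert w (insert (Neg \<phi>) S))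
      then insert (SOME w. w \<in> witnesses \<phi> \<and> consistent (insert w (insert (Neg \<phi>) S)))
             (insert (Neg \<phi>) S)
      else insert (Neg \<phi>) S)"

lemma lindenbaum_step_consistent: "consistent S \<Longrightarrow> consistent (lindenbaum_step S \<phi>)"
  unfolding lindenbaum_step_def
  by (auto intro: consistent_insert_Neg someI2_ex[where Q = "\<lambda>w. consistent (insert w _)"])

lemma subset_lindenbaum_step: "S \<subseteq> lindenbaum_step S \<phi>"
  by (auto simp: lindenbaum_step_def)

lemma lindenbaum_step_decides: "\<phi> \<in> lindenbaum_step S \<phi> \<or> Neg \<phi> \<in> lindenbaum_step S \<phi>"
  by (auto simp: lindenbaum_step_def)

lemma lindenbaum_step_witness:
  assumes "consistent S" and "\<phi> \<notin> lindenbaum_step S \<phi>" and "witnesses \<phi> \<noteq> {}"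
  shows "\<exists>w\<in>witnesses \<phi>. w \<in> lindenbaum_step S \<phi>"
proof -
  have rejected: "\<not> consistent (insert \<phi> S)"
    using assms(2) by (auto simp: lindenbaum_step_def)
  then have exists: "\<exists>w. w \<in> witnesses \<phi> \<and> consistent (insert w (insert (Neg \<phi>) S))"
    using consistent_witness[OF assms(1) _ assms(3)] by blast
  then have "(SOME w. w \<in> witnesses \<phi> \<and> consistent (insert w (insert (Neg \<phi>) S))) \<in> witnesses \<phi>"
    by (rule someI2_ex) simp
  with rejected exists show ?thesis by (auto simp: lindenbaum_step_def)
qed

primrec lindenbaum_chain :: "fm set \<Rightarrow> nat \<Rightarrow> fm set" where
  "lindenbaum_chain T 0 = T"
| "lindenbaum_chain T (Suc n) = lindenbaum_step (lindenbaum_chain T n) (from_nat n)"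

definition lindenbaum :: "fm set \<Rightarrow> fm set" where
  "lindenbaum T = (\<Union>n. lindenbaum_chain T n)"

lemma lindenbaum_chain_consistent: "consistent T \<Longrightarrow> consistent (lindenbaum_chain T n)"
  by (induction n) (auto intro: lindenbaum_step_consistent)

lemma lindenbaum_chain_mono: "m \<le> n \<Longrightarrow> lindenbaum_chain T m \<subseteq> lindenbaum_chain T n"
  by (rule lift_Suc_mono_le[of "lindenbaum_chain T"]) (simp_all add: subset_lindenbaum_step)

lemma lindenbaum_chain_subset_lindenbaum: "lindenbaum_chain T n \<subseteq> lindenbaum T"
  by (auto simp: lindenbaum_def)

lemma lindenbaum_chain_decides: "\<phi> \<in> lindenbaum_chain T (Suc (to_nat \<phi>))
    \<or> Neg \<phi> \<in> lindenbaum_chain T (Suc (to_nat \<phi>))"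
  using lindenbaum_step_decides by simp

lemma finite_subset_lindenbaum_chain:
  "finite F \<Longrightarrow> F \<subseteq> lindenbaum T \<Longrightarrow> \<exists>n. F \<subseteq> lindenbaum_chain T n"
proof (induction F rule: finite_induct)
  case (insert a F)
  then obtain m n where "F \<subseteq> lindenbaum_chain T m" "a \<in> lindenbaum_chain T n"
    by (auto simp: lindenbaum_def)
  then have "insert a F \<subseteq> lindenbaum_chain T (max m n)"
    using lindenbaum_chain_mono[of m "max m n" T] lindenbaum_chain_mono[of n "max m n" T] by auto
  then show ?case ..
qed simp

lemma lindenbaum_no_contradiction:
  assumes "consistent T" and "\<phi> \<in> lindenbaum T" and "Neg \<phi> \<in> lindenbaum T"
  shows False
proof -
  obtain n where "{\<phi>, Neg \<phi>} \<subseteq> lindenbaum_chain T n"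
    using assms(2,3) finite_subset_lindenbaum_chain[of "{\<phi>, Neg \<phi>}"] by auto
  then show False
    using lindenbaum_chain_consistent[OF assms(1)] inconsistentI derives.d_hyp by (metis insert_subset)
qed

lemma lindenbaum_chain_derives_mem:
  assumes T: "consistent T" and "derives (lindenbaum_chain T m) \<phi>"
  shows "\<phi> \<in> lindenbaum T"
proof (rule ccontr)
  define n where "n = max m (Suc (to_nat \<phi>))"
  assume "\<phi> \<notin> lindenbaum T"
  then have "Neg \<phi> \<in> lindenbaum_chain T (Suc (to_nat \<phi>))"
    using lindenbaum_chain_decides lindenbaum_chain_subset_lindenbaum by blast
  then have "Neg \<phi> \<in> lindenbaum_chain T n"
    unfolding n_def by (meson lindenbaum_chain_mono max.cobounded2 subsetD)
  then have "derives (lindenbaum_chain T n) (Neg \<phi>)" by (rule derives.d_hyp)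
  moreover have "derives (lindenbaum_chain T n) \<phi>"
    using assms(2) lindenbaum_chain_mono[of m n] derives_mono by (auto simp: n_def)
  ultimately show False
    using lindenbaum_chain_consistent[OF T] inconsistentI by blast
qed

lemma lindenbaum_omega_closed:
  assumes T: "consistent T" and "omega_premises c \<noteq> {}"
    and prems_in: "\<forall>q\<in>omega_premises c. Imp th q \<in> lindenbaum T"
  shows "Imp th c \<in> lindenbaum T"
proof (rule ccontr)
  let ?\<phi> = "Imp th c"
  let ?S = "lindenbaum_chain T (to_nat ?\<phi>)"
  assume "?\<phi> \<notin> lindenbaum T"
  then have "?\<phi> \<notin> lindenbaum_step ?S ?\<phi>"
    using lindenbaum_chain_subset_lindenbaum[of T "Suc (to_nat ?\<phi>)"] by auto
  moreover have "witnesses ?\<phi> \<noteq> {}"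
    using assms(2) by (simp add: witnesses_Imp)
  ultimately obtain q where "q \<in> omega_premises c" "Neg (Imp th q) \<in> lindenbaum_step ?S ?\<phi>"
    using lindenbaum_step_witness[OF lindenbaum_chain_consistent[OF T]]
    by (force simp: witnesses_Imp)
  then show False
    using lindenbaum_chain_subset_lindenbaum[of T "Suc (to_nat ?\<phi>)"] prems_in
      lindenbaum_no_contradiction[OF T] by auto
qed

lemma lindenbaum_derives_mem:
  assumes T: "consistent T" and "derives (lindenbaum T) \<psi>"
  shows "\<psi> \<in> lindenbaum T"
  using assms(2)
proof (induction "lindenbaum T" \<psi> rule: derives.induct)
  case (d_ax a)
  then show ?case using lindenbaum_chain_derives_mem[OF T, of 0] derives.d_ax by blast
next
  case (d_R1 a b)
  then obtain n where "{a, Imp a b} \<subseteq> lindenbaum_chain T n"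
    using finite_subset_lindenbaum_chain[of "{a, Imp a b}"] by auto
  then have "derives (lindenbaum_chain T n) b" by (auto intro: derives.d_R1 derives.d_hyp)
  then show ?case using lindenbaum_chain_derives_mem[OF T] by blast
next
  case (d_R2 a m)
  then show ?case using lindenbaum_chain_derives_mem[OF T, of 0] derives.d_R2 by blast
next
  case (d_R3 th b a)
  then show ?case using lindenbaum_omega_closed[OF T, of "Neg (Uu a b)"] by auto
next
  case (d_R4 th a b)
  then show ?case using lindenbaum_omega_closed[OF T, of "Neg (UU a b)"] by auto
qed

theorem mainTheorem6:
  fixes T :: "fm set"
  assumes "is_theory T" and "consistent T"
  shows "\<exists>T'. is_theory T' \<and> T \<subseteq> T' \<and> consistent T' \<and> complete T'"
proof (intro exI conjI)
  show "T \<subseteq> lindenbaum T"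
    using lindenbaum_chain_subset_lindenbaum[of T 0] by simp
  with assms(1) show "is_theory (lindenbaum T)" by (auto simp: is_theory_def)
  show "consistent (lindenbaum T)"
    using lindenbaum_derives_mem[OF assms(2)] lindenbaum_no_contradiction[OF assms(2)]
    by (auto simp: consistent_def)
  show "complete (lindenbaum T)"
    using lindenbaum_chain_decides lindenbaum_chain_subset_lindenbaum derives.d_hyp
    by (metis complete_def subsetD)
qed

end
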